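(* Let $D$ be a consistent domain, $a$ an action and $(M,s)$ a state such that $\Phi_D(a,(M,s))\neq\emptyset$. Then for each $(M',s')\in(M,s)\otimes\Omega(a,(M,s))$ there exists a state in $\Phi_D(a,(M,s))$ equivalent to $(M',s')$, and conversely for each state in $\Phi_D(a,(M,s))$ there exists an equivalent state in $(M,s)\otimes\Omega(a,(M,s))$ (where $(M,s)\otimes\emptyset=\emptyset$).
   Context: Agents $\mathcal{AG}=\{1,\dots,n\}$, fluents $\mathcal F$, actions. Belief formulae: built from propositional formulae over $\mathcal F$ with $\mathbf B_i$, Boolean connectives, $\mathbf E_\alpha,\mathbf C_\alpha$ ($\emptyset\ne\alpha\subseteq\mathcal{AG}$). Kripke structure $M$: worlds $M[S]$, interpretations $M[\pi](u)\subseteq\mathcal F$, relations $M[i]$; state $(M,s)$. Standard Kripke satisfaction ($\mathbf B_i\varphi$: $\varphi$ holds at all $M[i]$-successors; $\mathbf E_\alpha\varphi$: $\mathbf B_i\varphi$ for all $i\in\alpha$; $\mathbf C_\alpha\varphi$: $\mathbf E^k_\alpha\varphi$ for all $k\ge0$). Two states are equivalent if they satisfy exactly the same belief formulae. Domain $D$: each action has exactly one "executable $a$ if $\psi$" and is of exactly one type: world-altering (statements "$a$ causes $\ell$ if $\varphi$", $\ell$ a literal), sensing (exactly one statement "$a$ determines $f$"; the paper assumes a single sensed fluent here) or announcement (exactly one "$a$ announces $\varphi$", $\varphi$ fluent formula); plus "$X$ observes $a$ if $\theta$" and "$X$ aware\_of $a$ if $\theta$". $F_D(a,M,s)$, $P_D(a,M,s)$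 are the agents whose observes (resp. aware\_of) condition holds in $(M,s)$, $O_D(a,M,s)$ the rest; for world-altering actions $P_D(a,M,s)=\emptyset$. $e_D(a,M,u)$ is the set of $\ell$ with "$a$ causes $\ell$ if $\varphi$" in $D$ and $(M,u)\models\varphi$. $D$ consistent: $F_D\cap P_D=\emptyset$ and each $e_D(a,M,u)$ consistent. Standing assumption: announcements are truthful, i.e. when an announcement of $\varphi$ is executable in $(M,s)$, $(M,s)\models\varphi$. $\Phi_D(a,(M,s))$ is $\emptyset$ if $a$ is not executable in $(M,s)$; otherwise a singleton $\{(M',s')\}$: (world-altering) for each $u$ with $a$ executable in $(M,u)$ a fresh world $r(a,u)$ with interpretation $M[\pi](u)$ updated by making the literals of $e_D(a,M,u)$ true; $M'$ = $M$ plus these worlds, plus $(r(a,u),r(a,v))$ for $i\in F_D$ and $(u,v)\in M[i]$, plus $(r(a,u),v)$ for $i\in O_D$ and $(u,v)\in M[i]$; $s'=r(a,s)$. (Sensing of $f$ / announcement of $\varphi$) with precondition $\psi$: take a fresh copy $c(u)$ of each $u$ with $(M,u)\models\psi$, same interpretation; for $i\in F_D$ link $c(u),c(v)$ iff $(u,v)\in M[i]$ and $u,v$ agree on $f$ (resp. on $\varphi$); for $i\in P_D$ link iff $(u,v)\in M[i]$; $M'$ is the union of $M$ and the copy, with additionally $(c(u),v)$ for $i\in O_D$ whenever $(u,v)\in M[i]$; $s'=c(s)$. Update model $\langle\Sigma,R_1,\dots,R_n,pre,sub\rangle$: events $\Sigma$, relations $R_i\subseteq\Sigma\times\Sigma$,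 $pre(e)$ a belief formula, $sub(e)$ a map $p\mapsto\varphi_p$ (identity $p\mapsto p$ when unspecified). $M\otimes\Sigma$: worlds $(u,e)$ with $(M,u)\models pre(e)$; $((u,e),(v,e'))\in(M\otimes\Sigma)[i]$ iff both are worlds, $(u,v)\in M[i]$, $(e,e')\in R_i$; $p$ true at $(u,e)$ iff $(M,u)\models sub(e)(p)$. For $\Gamma\subseteq\Sigma$, $(M,s)\otimes(\Sigma,\Gamma)=\{(M\otimes\Sigma,(s,e))\mid e\in\Gamma,(M,s)\models pre(e)\}$. $\Omega(a,(M,s))=\emptyset$ if $a$ is not executable; otherwise, with $(F,P,O)$ the frame $(F_D,P_D,O_D)(a,M,s)$ and $\psi$ the precondition: (world-altering) $\Sigma=\{\sigma,\epsilon\}$, $R_i=\{(\sigma,\sigma),(\epsilon,\epsilon)\}$ for $i\in F$, $R_i=\{(\sigma,\epsilon),(\epsilon,\epsilon)\}$ for $i\in O$, $pre(\sigma)=\psi$, $pre(\epsilon)=\top$, $sub(\epsilon)$ identity, $sub(\sigma)(p)=\Psi^+(p,a)\vee(p\wedge\neg\Psi^-(p,a))$ where $\Psi^{+}(p,a)$ (resp. $\Psi^-(p,a)$) is the disjunction of the conditions $\varphi$ of all "$a$ causes $p$ if $\varphi$" (resp. "$a$ causes $\neg p$ if $\varphi$"); designated set $\{\sigma\}$. (Sensing $f$ / announcing $\varphi$) $\Sigma=\{\sigma,\tau,\epsilon\}$; $R_i=\{(\sigma,\sigma),(\tau,\tau),(\epsilon,\epsilon)\}$ for $i\in F$, that set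 plus $(\sigma,\tau),(\tau,\sigma)$ for $i\in P$, $\{(\sigma,\epsilon),(\tau,\epsilon),(\epsilon,\epsilon)\}$ for $i\in O$; $pre(\sigma)=\psi\wedge f$ (resp. $\psi\wedge\varphi$), $pre(\tau)=\psi\wedge\neg f$ (resp. $\psi\wedge\neg\varphi$), $pre(\epsilon)=\top$; all substitutions identity; designated set $\{\sigma,\tau\}$ for sensing and $\{\sigma\}$ for announcements. *)

theory Defs
  imports Main
begin

datatype ('ag, 'f) bform =
    Atom 'f
  | FTop
  | FNot "('ag, 'f) bform"
  | FAnd "('ag, 'f) bform" "('ag, 'f) bform"
  | FOr "('ag, 'f) bform" "('ag, 'f) bform"
  | Bel 'ag "('ag, 'f) bform"
  | Ev "'ag set" "('ag, 'f) bform"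
  | Com "'ag set" "('ag, 'f) bform"

fun wf_form :: "('ag, 'f) bform \<Rightarrow> bool" where
  "wf_form (Atom p) = True"
| "wf_form FTop = True"
| "wf_form (FNot \<phi>) = wf_form \<phi>"
| "wf_form (FAnd \<phi> \<psi>) = (wf_form \<phi> \<and> wf_form \<psi>)"
| "wf_form (FOr \<phi> \<psi>) = (wf_form \<phi> \<and> wf_form \<psi>)"
| "wf_form (Bel i \<phi>) = wf_form \<phi>"
| "wf_form (Ev \<alpha> \<phi>) = (\<alpha> \<noteq> {} \<and> wf_form \<phi>)"
| "wf_form (Com \<alpha> \<phi>) = (\<alpha> \<noteq> {} \<and> wf_form \<phi>)"

fun fluent_form :: "('ag, 'f) bform \<Rightarrow> bool" where
  "fluent_form (Atom p) = True"
| "fluent_form FTop = True"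
| "fluent_form (FNot \<phi>) = fluent_form \<phi>"
| "fluent_form (FAnd \<phi> \<psi>) = (fluent_form \<phi> \<and> fluent_form \<psi>)"
| "fluent_form (FOr \<phi> \<psi>) = (fluent_form \<phi> \<and> fluent_form \<psi>)"
| "fluent_form (Bel i \<phi>) = False"
| "fluent_form (Ev \<alpha> \<phi>) = False"
| "fluent_form (Com \<alpha> \<phi>) = False"

record ('ag, 'f, 'w) kripke =
  worlds :: "'w set"
  interp :: "'w \<Rightarrow> 'f set"
  krel   :: "'ag \<Rightarrow> ('w \<times> 'w) set"

definition wf_kripke :: "('ag, 'f, 'w) kripke \<Rightarrow> bool" where
  "wf_kripke M \<longleftrightarrow> (\<forall>i. krel M i \<subseteq> worlds M \<times> worlds M)"

fun sat :: "('ag, 'f, 'w) kripke \<Rightarrow> 'w \<Rightarrow> ('ag, 'f) bform \<Rightarrow> bool" where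
  "sat M u (Atom p) = (p \<in> interp M u)"
| "sat M u FTop = True"
| "sat M u (FNot \<phi>) = (\<not> sat M u \<phi>)"
| "sat M u (FAnd \<phi> \<psi>) = (sat M u \<phi> \<and> sat M u \<psi>)"
| "sat M u (FOr \<phi> \<psi>) = (sat M u \<phi> \<or> sat M u \<psi>)"
| "sat M u (Bel i \<phi>) = (\<forall>v. (u, v) \<in> krel M i \<longrightarrow> sat M v \<phi>)"
| "sat M u (Ev \<alpha> \<phi>) = (\<forall>i\<in>\<alpha>. \<forall>v. (u, v) \<in> krel M i \<longrightarrow> sat M v \<phi>)"
| "sat M u (Com \<alpha> \<phi>) =
     (\<forall>k. \<forall>v. (u, v) \<in> (\<Union>i\<in>\<alpha>. krel M i) ^^ k \<longrightarrow> sat M v \<phi>)"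

definition equiv_state ::
  "('ag, 'f, 'w) kripke \<times> 'w \<Rightarrow> ('ag, 'f, 'v) kripke \<times> 'v \<Rightarrow> bool" where
  "equiv_state st st' \<longleftrightarrow>
     (\<forall>\<phi>. wf_form \<phi> \<longrightarrow> (sat (fst st) (snd st) \<phi> \<longleftrightarrow> sat (fst st') (snd st') \<phi>))"

datatype 'f literal = LPos 'f | LNeg 'f

datatype ('ag, 'f) akind =
    WorldAltering
  | Sensing 'f                      \<comment> \<open>a determines f\<close>
  | Announcement "('ag, 'f) bform"  \<comment> \<open>a announces phi\<close>

record ('ag, 'f, 'act) mdomain =
  exec     :: "'act \<Rightarrow> ('ag, 'f) bform"                    \<comment> \<open>executable a if psi\<close>
  kind     :: "'act \<Rightarrow> ('ag, 'f) akind"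
  causes   :: "('act \<times> 'f literal \<times> ('ag, 'f) bform) list"   \<comment> \<open>a causes l if phi\<close>
  observes :: "('ag set \<times> 'act \<times> ('ag, 'f) bform) list"   \<comment> \<open>X observes a if theta\<close>
  aware    :: "('ag set \<times> 'act \<times> ('ag, 'f) bform) list"   \<comment> \<open>X aware_of a if theta\<close>

definition wf_domain :: "('ag, 'f, 'act) mdomain \<Rightarrow> bool" where
  "wf_domain D \<longleftrightarrow> (\<forall>a \<phi>. kind D a = Announcement \<phi> \<longrightarrow> fluent_form \<phi>)"

definition fullobs :: "('ag, 'f, 'act) mdomain \<Rightarrow> 'act \<Rightarrow> ('ag, 'f, 'w) kripke \<Rightarrow> 'w \<Rightarrow> 'ag set" where
  "fullobs D a M s = {i. \<exists>X \<theta>. (X, a, \<theta>) \<in> set (observes D) \<and> i \<in> X \<and> sat M s \<theta>}"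

definition partobs :: "('ag, 'f, 'act) mdomain \<Rightarrow> 'act \<Rightarrow> ('ag, 'f, 'w) kripke \<Rightarrow> 'w \<Rightarrow> 'ag set" where
  "partobs D a M s =
     (if kind D a = WorldAltering then {}
      else {i. \<exists>X \<theta>. (X, a, \<theta>) \<in> set (aware D) \<and> i \<in> X \<and> sat M s \<theta>})"

definition oblobs :: "('ag, 'f, 'act) mdomain \<Rightarrow> 'act \<Rightarrow> ('ag, 'f, 'w) kripke \<Rightarrow> 'w \<Rightarrow> 'ag set" where
  "oblobs D a M s = UNIV - fullobs D a M s - partobs D a M s"

definition eff :: "('ag, 'f, 'act) mdomain \<Rightarrow> 'act \<Rightarrow> ('ag, 'f, 'w) kripke \<Rightarrow> 'w \<Rightarrow> 'f literal set" where
  "eff D a M u = {l. \<exists>\<phi>. (a, l, \<phi>) \<in> set (causes D) \<and> sat M u \<phi>}"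

definition consistent_lits :: "'f literal set \<Rightarrow> bool" where
  "consistent_lits L \<longleftrightarrow> \<not> (\<exists>p. LPos p \<in> L \<and> LNeg p \<in> L)"

definition consistent_domain :: "('ag, 'f, 'act) mdomain \<Rightarrow> 'w itself \<Rightarrow> bool" where
  "consistent_domain D (_ :: 'w itself) \<longleftrightarrow>
     (\<forall>(M :: ('ag, 'f, 'w) kripke) a s u.
        fullobs D a M s \<inter> partobs D a M s = {} \<and> consistent_lits (eff D a M u))"

definition update_interp :: "'f set \<Rightarrow> 'f literal set \<Rightarrow> 'f set" where
  "update_interp I L = (I - {p. LNeg p \<in> L}) \<union> {p. LPos p \<in> L}"

text \<open>Worlds of the result: Inl u = old world u; Inr u = fresh world r(a,u) resp. c(u).\<close>

definition phi_wa :: "('ag, 'f, 'act) mdomain \<Rightarrow> 'act \<Rightarrow> ('ag, 'f, 'w) kripke \<Rightarrow> 'w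
                      \<Rightarrow> ('ag, 'f, 'w + 'w) kripke" where
  "phi_wa D a M s =
     (let X = {u \<in> worlds M. sat M u (exec D a)};
          F = fullobs D a M s; Ob = oblobs D a M s in
      \<lparr> worlds = Inl ` worlds M \<union> Inr ` X,
        interp = (\<lambda>w. case w of Inl u \<Rightarrow> interp M u
                               | Inr u \<Rightarrow> update_interp (interp M u) (eff D a M u)),
        krel = (\<lambda>i. {(Inl u, Inl v) | u v. (u, v) \<in> krel M i}
                 \<union> (if i \<in> F then {(Inr u, Inr v) | u v. u \<in> X \<and> v \<in> X \<and> (u, v) \<in> krel M i} else {})
                 \<union> (if i \<in> Ob then {(Inr u, Inl v) | u v. u \<in> X \<and> (u, v) \<in> krel M i} else {})) \<rparr>)"

text \<open>Sensing of f (chi = f) or announcement of phi (chi = phi).\<close>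
definition phi_ep :: "('ag, 'f, 'act) mdomain \<Rightarrow> 'act \<Rightarrow> ('ag, 'f) bform \<Rightarrow> ('ag, 'f, 'w) kripke \<Rightarrow> 'w
                      \<Rightarrow> ('ag, 'f, 'w + 'w) kripke" where
  "phi_ep D a \<chi> M s =
     (let X = {u \<in> worlds M. sat M u (exec D a)};
          F = fullobs D a M s; P = partobs D a M s; Ob = oblobs D a M s in
      \<lparr> worlds = Inl ` worlds M \<union> Inr ` X,
        interp = (\<lambda>w. case w of Inl u \<Rightarrow> interp M u | Inr u \<Rightarrow> interp M u),
        krel = (\<lambda>i. {(Inl u, Inl v) | u v. (u, v) \<in> krel M i}
                 \<union> (if i \<in> F then {(Inr u, Inr v) | u v. u \<in> X \<and> v \<in> X \<and> (u, v) \<in> krel M i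
                                                      \<and> (sat M u \<chi> \<longleftrightarrow> sat M v \<chi>)} else {})
                 \<union> (if i \<in> P then {(Inr u, Inr v) | u v. u \<in> X \<and> v \<in> X \<and> (u, v) \<in> krel M i} else {})
                 \<union> (if i \<in> Ob then {(Inr u, Inl v) | u v. u \<in> X \<and> (u, v) \<in> krel M i} else {})) \<rparr>)"

definition Phi :: "('ag, 'f, 'act) mdomain \<Rightarrow> 'act \<Rightarrow> ('ag, 'f, 'w) kripke \<Rightarrow> 'w
                   \<Rightarrow> (('ag, 'f, 'w + 'w) kripke \<times> ('w + 'w)) set" where
  "Phi D a M s =
     (if \<not> sat M s (exec D a) then {}
      else (case kind D a of
              WorldAltering \<Rightarrow> {(phi_wa D a M s, Inr s)}
            | Sensing f \<Rightarrow> {(phi_ep D a (Atom f) M s, Inr s)}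
            | Announcement \<phi> \<Rightarrow> {(phi_ep D a \<phi> M s, Inr s)}))"

record ('ag, 'f, 'e) umodel =
  events :: "'e set"
  erel   :: "'ag \<Rightarrow> ('e \<times> 'e) set"
  pre    :: "'e \<Rightarrow> ('ag, 'f) bform"
  sub    :: "'e \<Rightarrow> 'f \<Rightarrow> ('ag, 'f) bform"

definition prod_model :: "('ag, 'f, 'w) kripke \<Rightarrow> ('ag, 'f, 'e) umodel \<Rightarrow> ('ag, 'f, 'w \<times> 'e) kripke" where
  "prod_model M U =
     (let W = {(u, e). u \<in> worlds M \<and> e \<in> events U \<and> sat M u (pre U e)} in
      \<lparr> worlds = W,
        interp = (\<lambda>(u, e). {p. sat M u (sub U e p)}),
        krel = (\<lambda>i. {((u, e), (v, e')). (u, e) \<in> W \<and> (v, e') \<in> W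
                                        \<and> (u, v) \<in> krel M i \<and> (e, e') \<in> erel U i}) \<rparr>)"

text \<open>(M,s) \<otimes> (Sigma, Gamma); None plays the role of the empty Omega.\<close>
definition prod_state :: "('ag, 'f, 'w) kripke \<Rightarrow> 'w \<Rightarrow> (('ag, 'f, 'e) umodel \<times> 'e set) option
                          \<Rightarrow> (('ag, 'f, 'w \<times> 'e) kripke \<times> ('w \<times> 'e)) set" where
  "prod_state M s \<Omega> =
     (case \<Omega> of None \<Rightarrow> {}
      | Some (U, \<Gamma>) \<Rightarrow> {(prod_model M U, (s, e)) | e. e \<in> \<Gamma> \<and> sat M s (pre U e)})"

datatype event = EvSigma | EvTau | EvEps

definition disj_list :: "('ag, 'f) bform list \<Rightarrow> ('ag, 'f) bform" where
  "disj_list xs = foldr FOr xs (FNot FTop)"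

definition Psi_plus :: "('ag, 'f, 'act) mdomain \<Rightarrow> 'f \<Rightarrow> 'act \<Rightarrow> ('ag, 'f) bform" where
  "Psi_plus D p a = disj_list [\<phi>. (b, l, \<phi>) \<leftarrow> causes D, b = a \<and> l = LPos p]"

definition Psi_minus :: "('ag, 'f, 'act) mdomain \<Rightarrow> 'f \<Rightarrow> 'act \<Rightarrow> ('ag, 'f) bform" where
  "Psi_minus D p a = disj_list [\<phi>. (b, l, \<phi>) \<leftarrow> causes D, b = a \<and> l = LNeg p]"

definition Omega :: "('ag, 'f, 'act) mdomain \<Rightarrow> 'act \<Rightarrow> ('ag, 'f, 'w) kripke \<Rightarrow> 'w
                     \<Rightarrow> (('ag, 'f, event) umodel \<times> event set) option" where
  "Omega D a M s =
     (if \<not> sat M s (exec D a) then None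
      else (let \<psi> = exec D a; F = fullobs D a M s; P = partobs D a M s; Ob = oblobs D a M s in
        case kind D a of
          WorldAltering \<Rightarrow>
            Some (\<lparr> events = {EvSigma, EvEps},
                    erel = (\<lambda>i. (if i \<in> F then {(EvSigma, EvSigma), (EvEps, EvEps)} else {})
                               \<union> (if i \<in> Ob then {(EvSigma, EvEps), (EvEps, EvEps)} else {})),
                    pre = (\<lambda>e. if e = EvSigma then \<psi> else FTop),
                    sub = (\<lambda>e p. if e = EvSigma
                                 then FOr (Psi_plus D p a) (FAnd (Atom p) (FNot (Psi_minus D p a)))
                                 else Atom p) \<rparr>,
                  {EvSigma})
        | Sensing f \<Rightarrow>
            Some (\<lparr> events = {EvSigma, EvTau, EvEps},
                    erel = (\<lambda>i. (if i \<in> F then {(EvSigma, EvSigma), (EvTau, EvTau), (EvEps, EvEps)} else {})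
                               \<union> (if i \<in> P then {(EvSigma, EvSigma), (EvTau, EvTau), (EvEps, EvEps),
                                                  (EvSigma, EvTau), (EvTau, EvSigma)} else {})
                               \<union> (if i \<in> Ob then {(EvSigma, EvEps), (EvTau, EvEps), (EvEps, EvEps)} else {})),
                    pre = (\<lambda>e. case e of EvSigma \<Rightarrow> FAnd \<psi> (Atom f)
                                      | EvTau \<Rightarrow> FAnd \<psi> (FNot (Atom f))
                                      | EvEps \<Rightarrow> FTop),
                    sub = (\<lambda>e p. Atom p) \<rparr>,
                  {EvSigma, EvTau})
        | Announcement \<phi> \<Rightarrow>
            Some (\<lparr> events = {EvSigma, EvTau, EvEps},
                    erel = (\<lambda>i. (if i \<in> F then {(EvSigma, EvSigma), (EvTau, EvTau), (EvEps, EvEps)} else {})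
                               \<union> (if i \<in> P then {(EvSigma, EvSigma), (EvTau, EvTau), (EvEps, EvEps),
                                                  (EvSigma, EvTau), (EvTau, EvSigma)} else {})
                               \<union> (if i \<in> Ob then {(EvSigma, EvEps), (EvTau, EvEps), (EvEps, EvEps)} else {})),
                    pre = (\<lambda>e. case e of EvSigma \<Rightarrow> FAnd \<psi> \<phi>
                                      | EvTau \<Rightarrow> FAnd \<psi> (FNot \<phi>)
                                      | EvEps \<Rightarrow> FTop),
                    sub = (\<lambda>e p. Atom p) \<rparr>,
                  {EvSigma})))"

end

theory Submission
  imports Defs
begin

text \<open>Both constructions keep a copy of the old structure and add one new world per world
where the action is executable. Sending an old world \<open>u\<close> to \<open>(u, \<epsilon>)\<close> and the new copy of
\<open>u\<close> to \<open>(u, \<sigma>)\<close> (or to \<open>(u, \<tau>)\<close> if the sensed fluent resp. the announced formula fails at \<open>u\<close>)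
is a bounded morphism from \<open>\<Phi>\<^sub>D(a, (M, s))\<close> onto the product \<open>M \<otimes> \<Omega>(a, (M, s))\<close>. Bounded
morphisms preserve all belief formulae, common belief included, since the forth and back
conditions lift to the powers of the relation \<open>\<Union>i\<in>\<alpha>. M[i]\<close>.\<close>

locale bounded_morphism =
  fixes M1 :: "('ag, 'f, 'w1) kripke" and M2 :: "('ag, 'f, 'w2) kripke"
    and A :: "'w1 set" and f :: "'w1 \<Rightarrow> 'w2"
  assumes interp_eq: "\<And>x. x \<in> A \<Longrightarrow> interp M1 x = interp M2 (f x)"
    and forth_step: "\<And>x x' i. x \<in> A \<Longrightarrow> (x, x') \<in> krel M1 i \<Longrightarrow> x' \<in> A \<and> (f x, f x') \<in> krel M2 i"
    and back_step: "\<And>x y i. x \<in> A \<Longrightarrow> (f x, y) \<in> krel M2 i \<Longrightarrow>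
                 \<exists>x'\<in>A. (x, x') \<in> krel M1 i \<and> f x' = y"
begin

lemma relpow_forth:
  assumes "(x, x') \<in> (\<Union>i\<in>\<alpha>. krel M1 i) ^^ k" and "x \<in> A"
  shows "x' \<in> A \<and> (f x, f x') \<in> (\<Union>i\<in>\<alpha>. krel M2 i) ^^ k"
  using assms(1)
proof (induction k arbitrary: x')
  case (Suc k)
  then obtain z i where "(x, z) \<in> (\<Union>i\<in>\<alpha>. krel M1 i) ^^ k" "i \<in> \<alpha>" "(z, x') \<in> krel M1 i"
    by auto
  with Suc.IH forth_step show ?case by fastforce
qed (use assms(2) in simp)

lemma relpow_back:
  assumes "(f x, y) \<in> (\<Union>i\<in>\<alpha>. krel M2 i) ^^ k" and "x \<in> A"
  shows "\<exists>x'\<in>A. (x, x') \<in> (\<Union>i\<in>\<alpha>. krel M1 i) ^^ k \<and> f x' = y"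
  using assms(1)
proof (induction k arbitrary: y)
  case (Suc k)
  then obtain z i where "(f x, z) \<in> (\<Union>i\<in>\<alpha>. krel M2 i) ^^ k" "i \<in> \<alpha>" "(z, y) \<in> krel M2 i"
    by auto
  with Suc.IH obtain x1 where "x1 \<in> A" "(x, x1) \<in> (\<Union>i\<in>\<alpha>. krel M1 i) ^^ k" "f x1 = z"
    by blast
  with back_step[of x1 y i] \<open>i \<in> \<alpha>\<close> \<open>(z, y) \<in> krel M2 i\<close> show ?case by fastforce
qed (use assms(2) in auto)

lemma sat_iff: "x \<in> A \<Longrightarrow> sat M1 x \<phi> \<longleftrightarrow> sat M2 (f x) \<phi>"
proof (induction \<phi> arbitrary: x)
  case (Atom p)
  then show ?case using interp_eq by simp
next
  case (Bel i \<phi>)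
  then show ?case using forth_step back_step[OF Bel.prems] by simp metis
next
  case (Ev \<alpha> \<phi>)
  then show ?case using forth_step back_step[OF Ev.prems] by simp metis
next
  case (Com \<alpha> \<phi>)
  then show ?case using relpow_forth relpow_back[OF _ Com.prems] by simp metis
qed simp_all

lemma equiv_state_image: "x \<in> A \<Longrightarrow> equiv_state (M1, x) (M2, f x)"
  by (simp add: equiv_state_def sat_iff)

end

lemma equiv_state_sym: "equiv_state st st' \<Longrightarrow> equiv_state st' st"
  by (auto simp: equiv_state_def)

lemma worlds_prod_model_iff [simp]:
  "(u, e) \<in> worlds (prod_model M U) \<longleftrightarrow> u \<in> worlds M \<and> e \<in> events U \<and> sat M u (pre U e)"
  by (simp add: prod_model_def Let_def)

lemma interp_prod_model [simp]: "interp (prod_model M U) (u, e) = {p. sat M u (sub U e p)}"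
  by (simp add: prod_model_def Let_def)

lemma krel_prod_model_iff [simp]:
  "((u, e), (v, e')) \<in> krel (prod_model M U) i \<longleftrightarrow>
     (u, e) \<in> worlds (prod_model M U) \<and> (v, e') \<in> worlds (prod_model M U)
     \<and> (u, v) \<in> krel M i \<and> (e, e') \<in> erel U i"
  by (simp add: prod_model_def Let_def)

lemma wf_kripke_succ_in_worlds: "wf_kripke M \<Longrightarrow> (u, v) \<in> krel M i \<Longrightarrow> v \<in> worlds M"
  unfolding wf_kripke_def by blast

definition wa_umodel :: "('ag, 'f, 'act) mdomain \<Rightarrow> 'act \<Rightarrow> ('ag, 'f, 'w) kripke \<Rightarrow> 'w
                         \<Rightarrow> ('ag, 'f, event) umodel" where
  "wa_umodel D a M s =
     \<lparr> events = {EvSigma, EvEps},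
       erel = (\<lambda>i. (if i \<in> fullobs D a M s then {(EvSigma, EvSigma), (EvEps, EvEps)} else {})
                  \<union> (if i \<in> oblobs D a M s then {(EvSigma, EvEps), (EvEps, EvEps)} else {})),
       pre = (\<lambda>e. if e = EvSigma then exec D a else FTop),
       sub = (\<lambda>e p. if e = EvSigma
                    then FOr (Psi_plus D p a) (FAnd (Atom p) (FNot (Psi_minus D p a)))
                    else Atom p) \<rparr>"

lemma Omega_WorldAltering:
  "sat M s (exec D a) \<Longrightarrow> kind D a = WorldAltering \<Longrightarrow>
   Omega D a M s = Some (wa_umodel D a M s, {EvSigma})"
  by (simp add: Omega_def wa_umodel_def Let_def)

lemma sat_disj_list: "sat M u (disj_list xs) \<longleftrightarrow> (\<exists>x\<in>set xs. sat M u x)"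
  by (induction xs) (auto simp: disj_list_def)

lemma sat_Psi_plus_iff: "sat M u (Psi_plus D p a) \<longleftrightarrow> LPos p \<in> eff D a M u"
  by (auto simp: Psi_plus_def eff_def sat_disj_list)

lemma sat_Psi_minus_iff: "sat M u (Psi_minus D p a) \<longleftrightarrow> LNeg p \<in> eff D a M u"
  by (auto simp: Psi_minus_def eff_def sat_disj_list)

lemma wa_umodel_simps [simp]:
  "events (wa_umodel D a M s) = {EvSigma, EvEps}"
  "pre (wa_umodel D a M s) EvSigma = exec D a"
  "pre (wa_umodel D a M s) EvEps = FTop"
  "sub (wa_umodel D a M s) EvEps p = Atom p"
  "sat M u (sub (wa_umodel D a M s) EvSigma p) \<longleftrightarrow> p \<in> update_interp (interp M u) (eff D a M u)"
  by (auto simp: wa_umodel_def update_interp_def sat_Psi_plus_iff sat_Psi_minus_iff)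

lemma erel_wa_umodel_iff [simp]:
  assumes "kind D a = WorldAltering"
  shows "(EvEps, e) \<in> erel (wa_umodel D a M s) i \<longleftrightarrow> e = EvEps"
    and "(EvSigma, EvSigma) \<in> erel (wa_umodel D a M s) i \<longleftrightarrow> i \<in> fullobs D a M s"
    and "(EvSigma, EvEps) \<in> erel (wa_umodel D a M s) i \<longleftrightarrow> i \<in> oblobs D a M s"
  using assms by (auto simp: wa_umodel_def oblobs_def partobs_def)

lemma phi_wa_simps [simp]:
  "Inl u \<in> worlds (phi_wa D a M s) \<longleftrightarrow> u \<in> worlds M"
  "Inr u \<in> worlds (phi_wa D a M s) \<longleftrightarrow> u \<in> worlds M \<and> sat M u (exec D a)"
  "interp (phi_wa D a M s) (Inl u) = interp M u"
  "interp (phi_wa D a M s) (Inr u) = update_interp (interp M u) (eff D a M u)"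
  by (auto simp: phi_wa_def Let_def)

lemma krel_phi_wa_iff [simp]:
  "(Inl u, y) \<in> krel (phi_wa D a M s) i \<longleftrightarrow> (\<exists>v. y = Inl v \<and> (u, v) \<in> krel M i)"
  "(Inr u, Inl v) \<in> krel (phi_wa D a M s) i \<longleftrightarrow>
     i \<in> oblobs D a M s \<and> Inr u \<in> worlds (phi_wa D a M s) \<and> (u, v) \<in> krel M i"
  "(Inr u, Inr v) \<in> krel (phi_wa D a M s) i \<longleftrightarrow>
     i \<in> fullobs D a M s \<and> Inr u \<in> worlds (phi_wa D a M s) \<and> Inr v \<in> worlds (phi_wa D a M s)
     \<and> (u, v) \<in> krel M i"
  by (auto simp: phi_wa_def Let_def)

fun wa_embed :: "'w + 'w \<Rightarrow> 'w \<times> event" where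
  "wa_embed (Inl u) = (u, EvEps)"
| "wa_embed (Inr u) = (u, EvSigma)"

lemma bounded_morphism_wa:
  assumes "wf_kripke M" and "kind D a = WorldAltering"
  shows "bounded_morphism (phi_wa D a M s) (prod_model M (wa_umodel D a M s))
           (worlds (phi_wa D a M s)) wa_embed"
proof
  fix x assume "x \<in> worlds (phi_wa D a M s)"
  then show "interp (phi_wa D a M s) x = interp (prod_model M (wa_umodel D a M s)) (wa_embed x)"
    by (cases x) auto
next
  fix x x' i assume "x \<in> worlds (phi_wa D a M s)" "(x, x') \<in> krel (phi_wa D a M s) i"
  then show "x' \<in> worlds (phi_wa D a M s)
             \<and> (wa_embed x, wa_embed x') \<in> krel (prod_model M (wa_umodel D a M s)) i"
    using assms wf_kripke_succ_in_worlds[OF assms(1)] by (cases x; cases x') auto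
next
  fix x y i
  assume "x \<in> worlds (phi_wa D a M s)" and "(wa_embed x, y) \<in> krel (prod_model M (wa_umodel D a M s)) i"
  then show "\<exists>x'\<in>worlds (phi_wa D a M s). (x, x') \<in> krel (phi_wa D a M s) i \<and> wa_embed x' = y"
  proof (cases y)
    case (Pair v e)
    with \<open>x \<in> _\<close> \<open>(wa_embed x, y) \<in> _\<close> assms show ?thesis
      by (cases x; cases e) (auto intro!: bexI[where x = "if e = EvEps then Inl v else Inr v"])
  qed
qed

lemma equiv_state_wa:
  assumes "wf_kripke M" and "s \<in> worlds M" and "sat M s (exec D a)"
    and "kind D a = WorldAltering"
  shows "equiv_state (phi_wa D a M s, Inr s) (prod_model M (wa_umodel D a M s), (s, EvSigma))"
proof -
  interpret bounded_morphism "phi_wa D a M s" "prod_model M (wa_umodel D a M s)"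
      "worlds (phi_wa D a M s)" wa_embed
    using bounded_morphism_wa[OF assms(1,4)] .
  from assms(2,3) show ?thesis using equiv_state_image[of "Inr s"] by simp
qed

text \<open>The two kinds differ only in the formula \<open>\<chi>\<close> whose truth value fully observant
agents learn: the sensed fluent resp. the announced formula.\<close>

definition ep_umodel :: "('ag, 'f, 'act) mdomain \<Rightarrow> 'act \<Rightarrow> ('ag, 'f) bform \<Rightarrow> ('ag, 'f, 'w) kripke
                         \<Rightarrow> 'w \<Rightarrow> ('ag, 'f, event) umodel" where
  "ep_umodel D a \<chi> M s =
     \<lparr> events = {EvSigma, EvTau, EvEps},
       erel = (\<lambda>i. (if i \<in> fullobs D a M s then {(EvSigma, EvSigma), (EvTau, EvTau), (EvEps, EvEps)}
                   else {})
                  \<union> (if i \<in> partobs D a M s then {(EvSigma, EvSigma), (EvTau, EvTau), (EvEps, EvEps),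
                                                (EvSigma, EvTau), (EvTau, EvSigma)} else {})
                  \<union> (if i \<in> oblobs D a M s then {(EvSigma, EvEps), (EvTau, EvEps), (EvEps, EvEps)}
                     else {})),
       pre = (\<lambda>e. case e of EvSigma \<Rightarrow> FAnd (exec D a) \<chi>
                         | EvTau \<Rightarrow> FAnd (exec D a) (FNot \<chi>)
                         | EvEps \<Rightarrow> FTop),
       sub = (\<lambda>e p. Atom p) \<rparr>"

lemma Omega_Sensing:
  "sat M s (exec D a) \<Longrightarrow> kind D a = Sensing f \<Longrightarrow>
   Omega D a M s = Some (ep_umodel D a (Atom f) M s, {EvSigma, EvTau})"
  by (simp add: Omega_def ep_umodel_def Let_def)

lemma Omega_Announcement:
  "sat M s (exec D a) \<Longrightarrow> kind D a = Announcement \<phi> \<Longrightarrow>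
   Omega D a M s = Some (ep_umodel D a \<phi> M s, {EvSigma})"
  by (simp add: Omega_def ep_umodel_def Let_def)

lemma ep_umodel_simps [simp]:
  "events (ep_umodel D a \<chi> M s) = UNIV"
  "pre (ep_umodel D a \<chi> M s) EvSigma = FAnd (exec D a) \<chi>"
  "pre (ep_umodel D a \<chi> M s) EvTau = FAnd (exec D a) (FNot \<chi>)"
  "pre (ep_umodel D a \<chi> M s) EvEps = FTop"
  "sub (ep_umodel D a \<chi> M s) e p = Atom p"
  by (auto simp: ep_umodel_def intro: event.exhaust)

lemma erel_ep_umodel_iff [simp]:
  "(EvEps, e) \<in> erel (ep_umodel D a \<chi> M s) i \<longleftrightarrow> e = EvEps"
  "e \<noteq> EvEps \<Longrightarrow> (e, EvEps) \<in> erel (ep_umodel D a \<chi> M s) i \<longleftrightarrow> i \<in> oblobs D a M s"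
  "e \<noteq> EvEps \<Longrightarrow> e' \<noteq> EvEps \<Longrightarrow> (e, e') \<in> erel (ep_umodel D a \<chi> M s) i \<longleftrightarrow>
     i \<in> fullobs D a M s \<and> e = e' \<or> i \<in> partobs D a M s"
  by (cases e; cases e'; auto simp: ep_umodel_def oblobs_def)+

lemma phi_ep_simps [simp]:
  "Inl u \<in> worlds (phi_ep D a \<chi> M s) \<longleftrightarrow> u \<in> worlds M"
  "Inr u \<in> worlds (phi_ep D a \<chi> M s) \<longleftrightarrow> u \<in> worlds M \<and> sat M u (exec D a)"
  "interp (phi_ep D a \<chi> M s) (Inl u) = interp M u"
  "interp (phi_ep D a \<chi> M s) (Inr u) = interp M u"
  by (auto simp: phi_ep_def Let_def)

lemma krel_phi_ep_iff [simp]: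
  "(Inl u, y) \<in> krel (phi_ep D a \<chi> M s) i \<longleftrightarrow> (\<exists>v. y = Inl v \<and> (u, v) \<in> krel M i)"
  "(Inr u, Inl v) \<in> krel (phi_ep D a \<chi> M s) i \<longleftrightarrow>
     i \<in> oblobs D a M s \<and> Inr u \<in> worlds (phi_ep D a \<chi> M s) \<and> (u, v) \<in> krel M i"
  "(Inr u, Inr v) \<in> krel (phi_ep D a \<chi> M s) i \<longleftrightarrow>
     (i \<in> fullobs D a M s \<and> (sat M u \<chi> \<longleftrightarrow> sat M v \<chi>) \<or> i \<in> partobs D a M s)
     \<and> Inr u \<in> worlds (phi_ep D a \<chi> M s) \<and> Inr v \<in> worlds (phi_ep D a \<chi> M s) \<and> (u, v) \<in> krel M i"
  by (auto simp: phi_ep_def Let_def)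

fun ep_embed :: "('ag, 'f, 'w) kripke \<Rightarrow> ('ag, 'f) bform \<Rightarrow> 'w + 'w \<Rightarrow> 'w \<times> event" where
  "ep_embed M \<chi> (Inl u) = (u, EvEps)"
| "ep_embed M \<chi> (Inr u) = (u, if sat M u \<chi> then EvSigma else EvTau)"

lemma bounded_morphism_ep:
  assumes "wf_kripke M"
  shows "bounded_morphism (phi_ep D a \<chi> M s) (prod_model M (ep_umodel D a \<chi> M s))
           (worlds (phi_ep D a \<chi> M s)) (ep_embed M \<chi>)"
proof
  fix x assume "x \<in> worlds (phi_ep D a \<chi> M s)"
  then show "interp (phi_ep D a \<chi> M s) x = interp (prod_model M (ep_umodel D a \<chi> M s)) (ep_embed M \<chi> x)"
    by (cases x) auto
next
  fix x x' i assume "x \<in> worlds (phi_ep D a \<chi> M s)" "(x, x') \<in> krel (phi_ep D a \<chi> M s) i"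
  then show "x' \<in> worlds (phi_ep D a \<chi> M s)
             \<and> (ep_embed M \<chi> x, ep_embed M \<chi> x') \<in> krel (prod_model M (ep_umodel D a \<chi> M s)) i"
    using wf_kripke_succ_in_worlds[OF assms] by (cases x; cases x') auto
next
  fix x y i
  assume "x \<in> worlds (phi_ep D a \<chi> M s)"
    and "(ep_embed M \<chi> x, y) \<in> krel (prod_model M (ep_umodel D a \<chi> M s)) i"
  then show "\<exists>x'\<in>worlds (phi_ep D a \<chi> M s). (x, x') \<in> krel (phi_ep D a \<chi> M s) i \<and> ep_embed M \<chi> x' = y"
  proof (cases y)
    case (Pair v e)
    with \<open>x \<in> _\<close> \<open>(ep_embed M \<chi> x, y) \<in> _\<close> show ?thesis
      by (cases x; cases e) (auto intro!: bexI[where x = "if e = EvEps then Inl v else Inr v"])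
  qed
qed

lemma equiv_state_ep:
  assumes "wf_kripke M" and "s \<in> worlds M" and "sat M s (exec D a)"
  shows "equiv_state (phi_ep D a \<chi> M s, Inr s)
           (prod_model M (ep_umodel D a \<chi> M s), (s, if sat M s \<chi> then EvSigma else EvTau))"
proof -
  interpret bounded_morphism "phi_ep D a \<chi> M s" "prod_model M (ep_umodel D a \<chi> M s)"
      "worlds (phi_ep D a \<chi> M s)" "ep_embed M \<chi>"
    using bounded_morphism_ep[OF assms(1)] .
  from assms(2,3) show ?thesis using equiv_state_image[of "Inr s"] by simp
qed

lemma Phi_Omega_singletons_equiv:
  assumes "wf_kripke M" and "s \<in> worlds M" and "sat M s (exec D a)"
    and truthful: "\<And>\<phi>. kind D a = Announcement \<phi> \<Longrightarrow> sat M s \<phi>"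
  shows "\<exists>st' st. Phi D a M s = {st'} \<and> prod_state M s (Omega D a M s) = {st}
                 \<and> equiv_state st' st"
proof (cases "kind D a")
  case WorldAltering
  with assms equiv_state_wa show ?thesis
    by (auto simp: Phi_def Omega_WorldAltering prod_state_def)
next
  case (Sensing f)
  have "prod_state M s (Omega D a M s) = {(prod_model M (ep_umodel D a (Atom f) M s),
                                           (s, if f \<in> interp M s then EvSigma else EvTau))}"
    using Sensing assms(3) by (auto simp: Omega_Sensing prod_state_def)
  with Sensing assms equiv_state_ep[of M s D a "Atom f"] show ?thesis
    by (simp add: Phi_def)
next
  case (Announcement \<phi>)
  with assms equiv_state_ep[of M s D a \<phi>] show ?thesis
    by (auto simp: Phi_def Omega_Announcement prod_state_def)
qed

theorem proposition5:
  fixes D :: "('ag, 'f, 'act) mdomain" and a :: 'act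
    and M :: "('ag, 'f, 'w) kripke" and s :: 'w
  assumes "wf_domain D"
    and "consistent_domain D TYPE('w)"
    and "wf_kripke M" and "s \<in> worlds M"
    and truthful: "\<And>\<phi>. kind D a = Announcement \<phi> \<Longrightarrow> sat M s (exec D a) \<Longrightarrow> sat M s \<phi>"
    and "Phi D a M s \<noteq> {}"
  shows "(\<forall>st \<in> prod_state M s (Omega D a M s). \<exists>st' \<in> Phi D a M s. equiv_state st' st)
       \<and> (\<forall>st' \<in> Phi D a M s. \<exists>st \<in> prod_state M s (Omega D a M s). equiv_state st st')"
proof -
  have exec: "sat M s (exec D a)"
    using \<open>Phi D a M s \<noteq> {}\<close> by (auto simp: Phi_def)
  obtain st' st where "Phi D a M s = {st'}" "prod_state M s (Omega D a M s) = {st}"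
    and "equiv_state st' st"
    using Phi_Omega_singletons_equiv[OF \<open>wf_kripke M\<close> \<open>s \<in> worlds M\<close> exec] truthful exec
    by blast
  then show ?thesis by (auto intro: equiv_state_sym)
qed

end
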